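(* Let $M$ and $N$ be matroids and let $P$ be a tensor product of $M$ and $N$. Let $S,T$ be disjoint subsets of $E(M)$ and $M'=M\setminus S/T$. Then $P'=P\setminus(S\times E(N))/(T\times E(N))$ is a tensor product of $M'$ and $N$.
   Context: Let $M,N$ be matroids on $E(M),E(N)$. A quasi product of $M$ and $N$ is a matroid $P$ on $E(M)\times E(N)$ such that: for every non-loop $e\in E(M)$ the map $x\mapsto(e,x)$ is an isomorphism from $N$ onto $P|_{\{e\}\times E(N)}$; for every non-loop $f\in E(N)$ the map $x\mapsto(x,f)$ is an isomorphism from $M$ onto $P|_{E(M)\times\{f\}}$; for a loop $e$ of $M$, $P|_{\{e\}\times E(N)}$ has rank $0$; for a loop $f$ of $N$, $P|_{E(M)\times\{f\}}$ has rank $0$. A tensor product of $M$ and $N$ is a quasi product of rank $\mathrm{rk}(M)\mathrm{rk}(N)$. *)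

theory Defs
  imports Main
begin

type_synonym 'a matroid = "'a set \<times> ('a set \<Rightarrow> bool)"

definition ground :: "'a matroid \<Rightarrow> 'a set" where
  "ground M = fst M"

definition indep :: "'a matroid \<Rightarrow> 'a set \<Rightarrow> bool" where
  "indep M = snd M"

definition is_matroid :: "'a matroid \<Rightarrow> bool" where
  "is_matroid M \<longleftrightarrow>
     finite (ground M) \<and>
     (\<forall>I. indep M I \<longrightarrow> I \<subseteq> ground M) \<and>
     indep M {} \<and>
     (\<forall>I J. indep M J \<and> I \<subseteq> J \<longrightarrow> indep M I) \<and>
     (\<forall>I J. indep M I \<and> indep M J \<and> card I < card J \<longrightarrow>
        (\<exists>x \<in> J - I. indep M (insert x I)))"

definition rk :: "'a matroid \<Rightarrow> 'a set \<Rightarrow> nat" where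
  "rk M A = Max {card I | I. I \<subseteq> A \<and> indep M I}"

definition is_loop :: "'a matroid \<Rightarrow> 'a \<Rightarrow> bool" where
  "is_loop M e \<longleftrightarrow> e \<in> ground M \<and> \<not> indep M {e}"

definition restrict :: "'a matroid \<Rightarrow> 'a set \<Rightarrow> 'a matroid" where
  "restrict M X = (ground M \<inter> X, \<lambda>I. indep M I \<and> I \<subseteq> X)"

definition delete :: "'a matroid \<Rightarrow> 'a set \<Rightarrow> 'a matroid" where
  "delete M S = restrict M (ground M - S)"

definition contract :: "'a matroid \<Rightarrow> 'a set \<Rightarrow> 'a matroid" where
  "contract M T = (ground M - T,
     \<lambda>I. I \<subseteq> ground M - T \<and> rk M (I \<union> (T \<inter> ground M)) = card I + rk M (T \<inter> ground M))"

definition matroid_iso :: "('a \<Rightarrow> 'b) \<Rightarrow> 'a matroid \<Rightarrow> 'b matroid \<Rightarrow> bool" where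
  "matroid_iso f M N \<longleftrightarrow> bij_betw f (ground M) (ground N) \<and>
     (\<forall>I \<subseteq> ground M. indep M I \<longleftrightarrow> indep N (f ` I))"

definition quasi_product :: "'a matroid \<Rightarrow> 'b matroid \<Rightarrow> ('a \<times> 'b) matroid \<Rightarrow> bool" where
  "quasi_product M N P \<longleftrightarrow>
     is_matroid P \<and> ground P = ground M \<times> ground N \<and>
     (\<forall>e \<in> ground M. \<not> is_loop M e \<longrightarrow>
        matroid_iso (\<lambda>x. (e, x)) N (restrict P ({e} \<times> ground N))) \<and>
     (\<forall>f \<in> ground N. \<not> is_loop N f \<longrightarrow>
        matroid_iso (\<lambda>x. (x, f)) M (restrict P (ground M \<times> {f}))) \<and>
     (\<forall>e \<in> ground M. is_loop M e \<longrightarrow> rk P ({e} \<times> ground N) = 0) \<and>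
     (\<forall>f \<in> ground N. is_loop N f \<longrightarrow> rk P (ground M \<times> {f}) = 0)"

definition tensor_product :: "'a matroid \<Rightarrow> 'b matroid \<Rightarrow> ('a \<times> 'b) matroid \<Rightarrow> bool" where
  "tensor_product M N P \<longleftrightarrow> quasi_product M N P \<and>
     rk P (ground P) = rk M (ground M) * rk N (ground N)"

end

theory Submission
  imports Defs
begin

text \<open>
  In a tensor product \<open>P\<close> of \<open>M\<close> and \<open>N\<close>, every set \<open>X \<times> E(N)\<close> has rank
  \<open>rk\<^sub>M(X) \<cdot> rk(N)\<close>. It is spanned by \<open>B \<times> C\<close> for bases \<open>B\<close> of \<open>X\<close> and \<open>C\<close> of \<open>N\<close>,
  which gives \<open>\<le>\<close>; splitting the total rank \<open>rk(M) \<cdot> rk(N)\<close> along a basis of \<open>E(M)\<close>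
  extending \<open>B\<close> gives \<open>\<ge>\<close>.
  Deleting \<open>S \<times> E(N)\<close> keeps the fibres of \<open>P\<close> over the remaining elements, so only the
  rank needs this formula. For contraction, if \<open>B\<^sub>T\<close> is a basis of \<open>T\<close> the formula makes
  \<open>B\<^sub>T \<times> C\<close> independent and hence a basis of \<open>T \<times> E(N)\<close>; independence in the contraction
  is then independence in \<open>P\<close> after adjoining \<open>B\<^sub>T \<times> C\<close>, and the fibre conditions
  reduce to those of \<open>P\<close>.
\<close>

section \<open>Rank and bases\<close>

lemma matroid_ground_finite: "is_matroid Q \<Longrightarrow> finite (ground Q)"
  by (simp add: is_matroid_def)

lemma matroid_indep_subset_ground: "is_matroid Q \<Longrightarrow> indep Q I \<Longrightarrow> I \<subseteq> ground Q"
  by (simp add: is_matroid_def)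

lemma matroid_indep_empty: "is_matroid Q \<Longrightarrow> indep Q {}"
  by (simp add: is_matroid_def)

lemma matroid_indep_subset: "is_matroid Q \<Longrightarrow> indep Q J \<Longrightarrow> I \<subseteq> J \<Longrightarrow> indep Q I"
  unfolding is_matroid_def by blast

lemma matroid_augment:
  "is_matroid Q \<Longrightarrow> indep Q I \<Longrightarrow> indep Q J \<Longrightarrow> card I < card J \<Longrightarrow>
   \<exists>x \<in> J - I. indep Q (insert x I)"
  unfolding is_matroid_def by blast

lemma matroid_indep_finite: "is_matroid Q \<Longrightarrow> indep Q I \<Longrightarrow> finite I"
  by (meson finite_subset matroid_indep_subset_ground matroid_ground_finite)

definition is_basis_of :: "'a matroid \<Rightarrow> 'a set \<Rightarrow> 'a set \<Rightarrow> bool" where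
  "is_basis_of Q B A \<longleftrightarrow> B \<subseteq> A \<and> indep Q B \<and> card B = rk Q A"

lemma finite_indep_cards:
  assumes "is_matroid Q" shows "finite {card I | I. I \<subseteq> A \<and> indep Q I}"
proof -
  have "{card I | I. I \<subseteq> A \<and> indep Q I} \<subseteq> {..card (ground Q)}"
    using assms matroid_indep_subset_ground[OF assms]
    by (auto intro!: card_mono simp: matroid_ground_finite)
  then show ?thesis
    using finite_subset by blast
qed

lemma card_le_rk: "is_matroid Q \<Longrightarrow> I \<subseteq> A \<Longrightarrow> indep Q I \<Longrightarrow> card I \<le> rk Q A"
  unfolding rk_def by (rule Max_ge) (auto simp: finite_indep_cards)

lemma ex_basis_of: assumes "is_matroid Q" obtains B where "is_basis_of Q B A"
proof -
  have "rk Q A \<in> {card I | I. I \<subseteq> A \<and> indep Q I}"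
    unfolding rk_def using assms matroid_indep_empty[OF assms]
    by (intro Max_in finite_indep_cards) auto
  then show ?thesis
    using that unfolding is_basis_of_def by auto
qed

lemma rk_mono: assumes Q: "is_matroid Q" and "A \<subseteq> B" shows "rk Q A \<le> rk Q B"
proof -
  obtain I where "is_basis_of Q I A"
    using ex_basis_of[OF Q] .
  with assms show ?thesis
    unfolding is_basis_of_def by (metis card_le_rk subset_trans)
qed

lemma rk_le_card: assumes Q: "is_matroid Q" and "finite A" shows "rk Q A \<le> card A"
proof -
  obtain I where "is_basis_of Q I A"
    using ex_basis_of[OF Q] .
  with assms show ?thesis
    unfolding is_basis_of_def by (metis card_mono)
qed

lemma rk_indep: assumes "is_matroid Q" "indep Q I" shows "rk Q I = card I"
  using card_le_rk[OF assms(1) _ assms(2), of I] rk_le_card[OF assms(1) matroid_indep_finite[OF assms]]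
  by simp

lemma indep_if_rk_eq_card:
  assumes Q: "is_matroid Q" and "finite A" "rk Q A = card A" shows "indep Q A"
proof -
  obtain I where I: "is_basis_of Q I A"
    using ex_basis_of[OF Q] .
  then have "I = A"
    using card_subset_eq[OF assms(2)] assms(3) unfolding is_basis_of_def by simp
  with I show ?thesis
    unfolding is_basis_of_def by simp
qed

lemma indep_augment_to_card:
  assumes Q: "is_matroid Q"
  shows "indep Q I \<Longrightarrow> indep Q J \<Longrightarrow> card I \<le> card J \<Longrightarrow>
     \<exists>I'. I \<subseteq> I' \<and> I' \<subseteq> I \<union> J \<and> indep Q I' \<and> card I' = card J"
proof (induction "card J - card I" arbitrary: I)
  case 0
  then show ?case by auto
next
  case (Suc n)
  then obtain x where x: "x \<in> J - I" "indep Q (insert x I)"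
    using matroid_augment[OF Q] by force
  have card_x: "card (insert x I) = Suc (card I)"
    using x matroid_indep_finite[OF Q Suc(3)] by simp
  moreover have "n = card J - card (insert x I)" "card (insert x I) \<le> card J"
    using Suc(2) card_x by simp_all
  ultimately obtain I' where "insert x I \<subseteq> I'" "I' \<subseteq> insert x I \<union> J" "indep Q I'" "card I' = card J"
    using Suc(1) x(2) Suc(4) by blast
  with x show ?case by blast
qed

lemma indep_extends_to_basis:
  assumes Q: "is_matroid Q" and "indep Q I" "I \<subseteq> A"
  obtains B where "I \<subseteq> B" "is_basis_of Q B A"
proof -
  obtain J where J: "J \<subseteq> A" "indep Q J" "card J = rk Q A"
    using ex_basis_of[OF Q] unfolding is_basis_of_def by blast
  then have "card I \<le> card J"
    using card_le_rk[OF Q assms(3,2)] by simp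
  then obtain I' where I': "I \<subseteq> I'" "I' \<subseteq> I \<union> J" "indep Q I'" "card I' = card J"
    using indep_augment_to_card[OF Q assms(2) J(2)] by blast
  then have "is_basis_of Q I' A"
    using J assms(3) unfolding is_basis_of_def by auto
  with I'(1) show ?thesis
    by (rule that)
qed

lemma rk_insert_basis:
  assumes Q: "is_matroid Q" and B: "is_basis_of Q B A" and "a \<in> A"
  shows "rk Q (insert a B) = rk Q B"
proof -
  have "rk Q (insert a B) \<le> rk Q A"
    using B assms(3) by (intro rk_mono[OF Q]) (auto simp: is_basis_of_def)
  also have "\<dots> = rk Q B"
    using B rk_indep[OF Q] unfolding is_basis_of_def by simp
  finally show ?thesis
    using rk_mono[OF Q, of B "insert a B"] by (simp add: subset_insertI antisym)
qed

lemma rk_insert_eq_mono: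
  assumes Q: "is_matroid Q" and "Z \<subseteq> X" and spans: "rk Q (insert y Z) = rk Q Z"
  shows "rk Q (insert y X) = rk Q X"
proof (rule ccontr)
  assume "rk Q (insert y X) \<noteq> rk Q X"
  moreover have "rk Q X \<le> rk Q (insert y X)"
    by (rule rk_mono[OF Q]) auto
  ultimately have lt: "rk Q X < rk Q (insert y X)"
    by simp
  obtain I where I: "I \<subseteq> Z" "indep Q I" "card I = rk Q Z"
    using ex_basis_of[OF Q] unfolding is_basis_of_def by blast
  moreover have "I \<subseteq> X"
    using I(1) \<open>Z \<subseteq> X\<close> by blast
  ultimately obtain I' where "I \<subseteq> I'" "is_basis_of Q I' X"
    using indep_extends_to_basis[OF Q] by metis
  then have I': "I \<subseteq> I'" "I' \<subseteq> X" "indep Q I'" "card I' = rk Q X"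
    unfolding is_basis_of_def by simp_all
  obtain J where J: "J \<subseteq> insert y X" "indep Q J" "card J = rk Q (insert y X)"
    using ex_basis_of[OF Q] unfolding is_basis_of_def by blast
  obtain x where x: "x \<in> J - I'" "indep Q (insert x I')"
    using matroid_augment[OF Q I'(3) J(2)] I'(4) J(3) lt by auto
  have fin: "finite I'"
    using matroid_indep_finite[OF Q I'(3)] .
  show False
  proof (cases "x \<in> X")
    case True
    then have "card (insert x I') \<le> rk Q X"
      using card_le_rk[OF Q _ x(2)] I'(2) by simp
    with x(1) fin I'(4) show False
      by simp
  next
    case False
    with x(1) J(1) have "x = y"
      by blast
    then have "indep Q (insert y I)"
      using matroid_indep_subset[OF Q x(2)] I'(1) by blast
    then have "card (insert y I) \<le> rk Q (insert y Z)"
      using card_le_rk[OF Q, of "insert y I"] I(1) by blast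
    moreover have "y \<notin> I" "finite I"
      using x(1) \<open>x = y\<close> I'(1) fin finite_subset by blast+
    ultimately show False
      using spans I(3) by simp
  qed
qed

lemma rk_Un_spanned:
  assumes Q: "is_matroid Q"
  shows "finite Y \<Longrightarrow> (\<And>y. y \<in> Y \<Longrightarrow> rk Q (insert y X) = rk Q X) \<Longrightarrow> rk Q (X \<union> Y) = rk Q X"
proof (induction Y rule: finite_induct)
  case empty
  then show ?case by simp
next
  case (insert y F)
  then have "rk Q (insert y (X \<union> F)) = rk Q (X \<union> F)"
    using rk_insert_eq_mono[OF Q, of X "X \<union> F" y] by auto
  with insert show ?case by simp
qed

lemma rk_Un_le: assumes Q: "is_matroid Q" shows "rk Q (U \<union> V) \<le> rk Q U + rk Q V"
proof -
  obtain J where J: "J \<subseteq> U \<union> V" "indep Q J" "card J = rk Q (U \<union> V)"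
    using ex_basis_of[OF Q] unfolding is_basis_of_def by blast
  have "card J \<le> card (J \<inter> U) + card (J - U)"
    using card_Int_Diff[OF matroid_indep_finite[OF Q J(2)], of U] by simp
  also have "card (J \<inter> U) \<le> rk Q U"
    using card_le_rk[OF Q _ matroid_indep_subset[OF Q J(2)]] by simp
  also have "card (J - U) \<le> rk Q V"
    by (rule card_le_rk[OF Q _ matroid_indep_subset[OF Q J(2) Diff_subset]]) (use J(1) in blast)
  finally show ?thesis
    using J(3) by simp
qed

lemma rk_empty: "is_matroid Q \<Longrightarrow> rk Q {} = 0"
  using rk_le_card[of Q "{}"] by simp

lemma rk_eq_0_iff:
  assumes Q: "is_matroid Q" shows "rk Q W = 0 \<longleftrightarrow> (\<forall>w\<in>W. \<not> indep Q {w})"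
proof
  assume "rk Q W = 0"
  show "\<forall>w\<in>W. \<not> indep Q {w}"
  proof (intro ballI notI)
    fix w assume "w \<in> W" "indep Q {w}"
    then have "card {w} \<le> rk Q W"
      by (intro card_le_rk[OF Q]) auto
    with \<open>rk Q W = 0\<close> show False
      by simp
  qed
next
  assume loops: "\<forall>w\<in>W. \<not> indep Q {w}"
  obtain I where I: "I \<subseteq> W" "indep Q I" "card I = rk Q W"
    using ex_basis_of[OF Q] unfolding is_basis_of_def by blast
  have "I = {}"
  proof (rule ccontr)
    assume "I \<noteq> {}"
    then obtain x where "x \<in> I"
      by blast
    then show False
      using loops I(1) matroid_indep_subset[OF Q I(2), of "{x}"] by blast
  qed
  with I(3) show "rk Q W = 0"
    by simp
qed

lemma rk_insert_loop:
  assumes Q: "is_matroid Q" and "\<not> indep Q {y}" shows "rk Q (insert y X) = rk Q X"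
proof -
  have "rk Q {y} = rk Q {}"
    using assms by (simp add: rk_eq_0_iff rk_empty)
  then show ?thesis
    using rk_insert_eq_mono[OF Q, of "{}" X y] by simp
qed

lemma rk_image_eq:
  assumes "inj g" and "\<And>X. X \<subseteq> W \<Longrightarrow> indep Q (g ` X) \<longleftrightarrow> indep R X"
  shows "rk Q (g ` W) = rk R W"
proof -
  have "{card I | I. I \<subseteq> g ` W \<and> indep Q I} = {card X | X. X \<subseteq> W \<and> indep R X}"
  proof (intro equalityI subsetI)
    fix c assume "c \<in> {card I | I. I \<subseteq> g ` W \<and> indep Q I}"
    then obtain X where "X \<subseteq> W" "c = card (g ` X)" "indep Q (g ` X)"
      by (auto simp: subset_image_iff)
    with assms show "c \<in> {card X | X. X \<subseteq> W \<and> indep R X}"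
      by (auto simp: card_image inj_on_subset)
  next
    fix c assume "c \<in> {card X | X. X \<subseteq> W \<and> indep R X}"
    then obtain X where "c = card X" "X \<subseteq> W" "indep R X"
      by auto
    with assms show "c \<in> {card I | I. I \<subseteq> g ` W \<and> indep Q I}"
      by (auto simp: card_image inj_on_subset intro!: exI[of _ "g ` X"])
  qed
  then show ?thesis
    unfolding rk_def by simp
qed

lemma rk_Un_basis:
  assumes Q: "is_matroid Q" and B: "is_basis_of Q B A" and "finite A"
  shows "rk Q (X \<union> A) = rk Q (X \<union> B)"
proof -
  have "rk Q (insert a (X \<union> B)) = rk Q (X \<union> B)" if "a \<in> A" for a
    using rk_insert_basis[OF Q B that] by (rule rk_insert_eq_mono[OF Q, rotated]) blast
  then have "rk Q (X \<union> B \<union> A) = rk Q (X \<union> B)"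
    using rk_Un_spanned[OF Q \<open>finite A\<close>] by blast
  moreover have "X \<union> B \<union> A = X \<union> A"
    using B unfolding is_basis_of_def by blast
  ultimately show ?thesis
    by simp
qed

section \<open>Restriction and contraction\<close>

lemma indep_restrict: "indep (restrict Q X) I \<longleftrightarrow> indep Q I \<and> I \<subseteq> X"
  by (simp add: restrict_def indep_def)

lemma ground_restrict: "ground (restrict Q X) = ground Q \<inter> X"
  by (simp add: restrict_def ground_def)

lemma rk_restrict: "rk (restrict Q X) W = rk Q (W \<inter> X)"
  unfolding rk_def indep_restrict by (rule arg_cong[where f = Max]) auto

lemma restrict_restrict: "restrict (restrict Q X) Y = restrict Q (X \<inter> Y)"
  by (auto simp: restrict_def ground_def indep_def)

lemma is_matroid_restrict: assumes Q: "is_matroid Q" shows "is_matroid (restrict Q X)"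
  unfolding is_matroid_def indep_restrict ground_restrict
proof (intro conjI allI impI)
  show "finite (ground Q \<inter> X)"
    using matroid_ground_finite[OF Q] by simp
next
  fix I J assume "(indep Q I \<and> I \<subseteq> X) \<and> (indep Q J \<and> J \<subseteq> X) \<and> card I < card J"
  then show "\<exists>x\<in>J - I. indep Q (insert x I) \<and> insert x I \<subseteq> X"
    using matroid_augment[OF Q] by blast
qed (use Q matroid_indep_subset_ground matroid_indep_empty matroid_indep_subset in blast)+

lemma matroid_iso_restrict:
  assumes iso: "matroid_iso g Q R" and "X \<subseteq> ground Q"
  shows "matroid_iso g (restrict Q X) (restrict R (g ` X))"
proof -
  have inj: "inj_on g (ground Q)" and "g ` ground Q = ground R"
    using iso unfolding matroid_iso_def bij_betw_def by auto
  then have "bij_betw g (ground Q \<inter> X) (ground R \<inter> g ` X)"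
    using assms(2) by (auto simp: bij_betw_def inj_on_subset Int_absorb1)
  moreover have "indep Q I \<and> I \<subseteq> X \<longleftrightarrow> indep R (g ` I) \<and> g ` I \<subseteq> g ` X" if "I \<subseteq> X" for I
    using iso that assms(2) unfolding matroid_iso_def by auto
  ultimately show ?thesis
    unfolding matroid_iso_def ground_restrict indep_restrict by auto
qed

lemma ground_contract: "ground (contract Q T) = ground Q - T"
  by (simp add: contract_def ground_def)

lemma indep_contract: "indep (contract Q T) I \<longleftrightarrow> I \<subseteq> ground Q - T \<and>
   rk Q (I \<union> (T \<inter> ground Q)) = card I + rk Q (T \<inter> ground Q)"
  by (simp add: contract_def indep_def)

lemma indep_contract_imp_indep:
  assumes Q: "is_matroid Q" and "indep (contract Q T) I" shows "indep Q I"
proof -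
  let ?T = "T \<inter> ground Q"
  have "I \<subseteq> ground Q" and rk_eq: "rk Q (I \<union> ?T) = card I + rk Q ?T"
    using assms(2) by (auto simp: indep_contract)
  then have fin: "finite I"
    using matroid_ground_finite[OF Q] finite_subset by blast
  have "card I \<le> rk Q I"
    using rk_eq rk_Un_le[OF Q, of I ?T] by simp
  then show ?thesis
    using indep_if_rk_eq_card[OF Q fin] rk_le_card[OF Q fin] by simp
qed

lemma indep_contract_iff:
  assumes Q: "is_matroid Q" and T: "T \<subseteq> ground Q" and BT: "is_basis_of Q BT T"
  shows "indep (contract Q T) I \<longleftrightarrow> I \<subseteq> ground Q - T \<and> indep Q (I \<union> BT)"
proof (cases "I \<subseteq> ground Q - T")
  case True
  have BT': "BT \<subseteq> T" "indep Q BT" "card BT = rk Q T"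
    using BT unfolding is_basis_of_def by auto
  have fin: "finite I" "finite BT" "finite T"
    using finite_subset[OF True] finite_subset[OF T] matroid_ground_finite[OF Q]
      matroid_indep_finite[OF Q BT'(2)] by auto
  have "I \<inter> BT = {}"
    using True BT'(1) by blast
  then have "card I + rk Q T = card (I \<union> BT)"
    using card_Un_disjoint[OF fin(1,2)] BT'(3) by simp
  moreover have "rk Q (I \<union> T) = rk Q (I \<union> BT)"
    using rk_Un_basis[OF Q BT fin(3)] .
  moreover have "T \<inter> ground Q = T"
    using T by blast
  ultimately show ?thesis
    using True indep_if_rk_eq_card[OF Q] fin rk_indep[OF Q, of "I \<union> BT"]
    by (auto simp: indep_contract)
qed (simp add: indep_contract)

lemma is_matroid_contract:
  assumes Q: "is_matroid Q" and T: "T \<subseteq> ground Q"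
  shows "is_matroid (contract Q T)"
proof -
  obtain BT where BT: "is_basis_of Q BT T"
    using ex_basis_of[OF Q] .
  note indep_iff = indep_contract_iff[OF Q T BT]
  have BT': "BT \<subseteq> T" "indep Q BT"
    using BT unfolding is_basis_of_def by auto
  have augment: "\<exists>x \<in> J - I. indep (contract Q T) (insert x I)"
    if "indep (contract Q T) I" "indep (contract Q T) J" "card I < card J" for I J
  proof -
    have A: "I \<subseteq> ground Q - T" "indep Q (I \<union> BT)" "J \<subseteq> ground Q - T" "indep Q (J \<union> BT)"
      using that indep_iff by auto
    have fin: "finite I" "finite J" "finite BT"
      using A matroid_indep_finite[OF Q] by (meson finite_Un)+
    have "I \<inter> BT = {}" "J \<inter> BT = {}"
      using A(1,3) BT' by blast+
    then have "card (I \<union> BT) < card (J \<union> BT)"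
      using card_Un_disjoint[OF fin(1,3)] card_Un_disjoint[OF fin(2,3)] that(3) by simp
    then obtain x where "x \<in> (J \<union> BT) - (I \<union> BT)" "indep Q (insert x (I \<union> BT))"
      using matroid_augment[OF Q A(2) A(4)] by blast
    with A show ?thesis
      using indep_iff by (intro bexI[of _ x]) auto
  qed
  show ?thesis
    unfolding is_matroid_def
  proof (intro conjI allI impI)
    show "finite (ground (contract Q T))"
      using matroid_ground_finite[OF Q] by (simp add: ground_contract)
    show "indep (contract Q T) {}"
      using BT' by (simp add: indep_iff)
  next
    fix I J assume "indep (contract Q T) J \<and> I \<subseteq> J"
    then show "indep (contract Q T) I"
      using indep_iff matroid_indep_subset[OF Q, of "J \<union> BT" "I \<union> BT"] by blast
  qed (use augment in \<open>auto simp: indep_iff ground_contract\<close>)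
qed

lemma rk_contract:
  assumes Q: "is_matroid Q" and T: "T \<subseteq> ground Q" and W: "W \<subseteq> ground Q - T"
  shows "rk (contract Q T) W = rk Q (W \<union> T) - rk Q T"
proof -
  obtain BT where BT: "is_basis_of Q BT T"
    using ex_basis_of[OF Q] .
  then have BT': "BT \<subseteq> T" "indep Q BT" "card BT = rk Q T"
    unfolding is_basis_of_def by auto
  note indep_iff = indep_contract_iff[OF Q T BT]
  have C: "is_matroid (contract Q T)"
    using is_matroid_contract[OF Q T] .
  have fin: "finite W" "finite BT" "finite T"
    using finite_subset[OF W] finite_subset[OF T] matroid_ground_finite[OF Q]
      matroid_indep_finite[OF Q BT'(2)] by auto
  have rk_W_T: "rk Q (W \<union> T) = rk Q (W \<union> BT)"
    using rk_Un_basis[OF Q BT fin(3)] .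
  obtain I where I: "I \<subseteq> W" "indep (contract Q T) I" "card I = rk (contract Q T) W"
    using ex_basis_of[OF C] unfolding is_basis_of_def by blast
  have "I \<inter> BT = {}"
    using I(1) W BT'(1) by blast
  then have "rk (contract Q T) W + rk Q T = card (I \<union> BT)"
    using card_Un_disjoint[OF finite_subset[OF I(1) fin(1)] fin(2)] I(3) BT'(3) by simp
  also have "\<dots> \<le> rk Q (W \<union> T)"
    unfolding rk_W_T using I(1,2) indep_iff by (intro card_le_rk[OF Q]) auto
  finally have lower: "rk (contract Q T) W + rk Q T \<le> rk Q (W \<union> T)" .
  have "BT \<subseteq> W \<union> BT"
    by blast
  then obtain B where "BT \<subseteq> B" "is_basis_of Q B (W \<union> BT)"
    by (rule indep_extends_to_basis[OF Q BT'(2)])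
  then have B: "BT \<subseteq> B" "B \<subseteq> W \<union> BT" "indep Q B" "card B = rk Q (W \<union> T)"
    unfolding is_basis_of_def rk_W_T by auto
  have "B - BT \<union> BT = B"
    using B(1) by blast
  then have "indep (contract Q T) (B - BT)"
    using indep_iff B(2,3) W by auto
  with B(2) have "card (B - BT) \<le> rk (contract Q T) W"
    by (intro card_le_rk[OF C]) auto
  moreover have "card B = card (B - BT) + card BT"
    using card_Diff_subset[OF fin(2) B(1)] card_mono[OF matroid_indep_finite[OF Q B(3)] B(1)] by simp
  ultimately show ?thesis
    using lower B(4) BT'(3) by linarith
qed

section \<open>Quasi products and tensor products\<close>

lemma image_Pair_left: "Pair e ` Y = {e} \<times> Y"
  by auto

lemma image_Pair_right: "(\<lambda>x. (x, f)) ` X = X \<times> {f}"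
  by auto

locale matroid_quasi_product =
  fixes M :: "'a matroid" and N :: "'b matroid" and P :: "('a \<times> 'b) matroid"
  assumes matroid_M: "is_matroid M" and matroid_N: "is_matroid N"
    and quasi_product: "quasi_product M N P"
begin

lemma matroid_P: "is_matroid P"
  using quasi_product by (simp add: quasi_product_def)

lemma ground_P: "ground P = ground M \<times> ground N"
  using quasi_product by (simp add: quasi_product_def)

lemma indep_times_singleton_iff:
  assumes "f \<in> ground N" "\<not> is_loop N f" "X \<subseteq> ground M"
  shows "indep P (X \<times> {f}) \<longleftrightarrow> indep M X"
proof -
  have "matroid_iso (\<lambda>x. (x, f)) M (restrict P (ground M \<times> {f}))"
    using quasi_product assms by (simp add: quasi_product_def)
  then have "indep M X \<longleftrightarrow> indep (restrict P (ground M \<times> {f})) (X \<times> {f})"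
    using assms(3) unfolding matroid_iso_def image_Pair_right by blast
  with assms(3) show ?thesis
    by (auto simp: indep_restrict)
qed

lemma indep_singleton_times_iff:
  assumes "e \<in> ground M" "\<not> is_loop M e" "Y \<subseteq> ground N"
  shows "indep P ({e} \<times> Y) \<longleftrightarrow> indep N Y"
proof -
  have "matroid_iso (Pair e) N (restrict P ({e} \<times> ground N))"
    using quasi_product assms by (simp add: quasi_product_def)
  then have "indep N Y \<longleftrightarrow> indep (restrict P ({e} \<times> ground N)) ({e} \<times> Y)"
    using assms(3) unfolding matroid_iso_def image_Pair_left by blast
  with assms(3) show ?thesis
    by (auto simp: indep_restrict)
qed

lemma rk_times_singleton:
  assumes "f \<in> ground N" "\<not> is_loop N f" "X \<subseteq> ground M"
  shows "rk P (X \<times> {f}) = rk M X"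
  unfolding image_Pair_right [symmetric]
proof (rule rk_image_eq)
  show "inj (\<lambda>x. (x, f))"
    by (auto simp: inj_def)
  fix Z assume "Z \<subseteq> X"
  with assms(3) have "Z \<subseteq> ground M"
    by blast
  then show "indep P ((\<lambda>x. (x, f)) ` Z) \<longleftrightarrow> indep M Z"
    unfolding image_Pair_right by (rule indep_times_singleton_iff[OF assms(1,2)])
qed

lemma rk_singleton_times:
  assumes "e \<in> ground M" "\<not> is_loop M e" "Y \<subseteq> ground N"
  shows "rk P ({e} \<times> Y) = rk N Y"
  unfolding image_Pair_left [symmetric]
proof (rule rk_image_eq)
  show "inj (Pair e)"
    by (auto simp: inj_def)
  fix Z assume "Z \<subseteq> Y"
  with assms(3) have "Z \<subseteq> ground N"
    by blast
  then show "indep P (Pair e ` Z) \<longleftrightarrow> indep N Z"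
    unfolding image_Pair_left by (rule indep_singleton_times_iff[OF assms(1,2)])
qed

lemma not_indep_loop_left:
  assumes "is_loop M e" "y \<in> ground N" shows "\<not> indep P {(e, y)}"
proof -
  have "rk P ({e} \<times> ground N) = 0"
    using quasi_product assms(1) by (simp add: quasi_product_def is_loop_def)
  with assms(2) show ?thesis
    by (simp add: rk_eq_0_iff[OF matroid_P])
qed

lemma not_indep_loop_right:
  assumes "is_loop N f" "x \<in> ground M" shows "\<not> indep P {(x, f)}"
proof -
  have "rk P (ground M \<times> {f}) = 0"
    using quasi_product assms(1) by (simp add: quasi_product_def is_loop_def)
  with assms(2) show ?thesis
    by (simp add: rk_eq_0_iff[OF matroid_P])
qed

lemma not_indep_if_loop:
  assumes "x \<in> ground M" "y \<in> ground N" "is_loop M x \<or> is_loop N y"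
  shows "\<not> indep P {(x, y)}"
  using assms not_indep_loop_left not_indep_loop_right by blast

text \<open>Each \<open>(x, y)\<close> is spanned by \<open>B \<times> {y}\<close>, the image of a basis of \<open>X\<close> in the copy of \<open>M\<close> at \<open>y\<close>.\<close>
lemma rk_times_basis_left:
  assumes X: "X \<subseteq> ground M" and B: "is_basis_of M B X" and Y: "Y \<subseteq> ground N"
  shows "rk P (X \<times> Y) = rk P (B \<times> Y)"
proof -
  have BX: "B \<subseteq> X"
    using B by (simp add: is_basis_of_def)
  have "rk P (insert z (B \<times> Y)) = rk P (B \<times> Y)" if "z \<in> X \<times> Y" for z
  proof -
    obtain x y where z: "z = (x, y)" "x \<in> X" "y \<in> Y"
      using \<open>z \<in> X \<times> Y\<close> by blast
    with X Y have xy: "x \<in> ground M" "y \<in> ground N"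
      by auto
    show ?thesis
    proof (cases "is_loop M x \<or> is_loop N y")
      case True
      with xy z(1) show ?thesis
        using rk_insert_loop[OF matroid_P] not_indep_if_loop by simp
    next
      case False
      have "insert z (B \<times> {y}) = insert x B \<times> {y}"
        using z(1) by auto
      then have "rk P (insert z (B \<times> {y})) = rk M (insert x B)"
        using rk_times_singleton[of y "insert x B"] False xy X BX by auto
      also have "\<dots> = rk M B"
        using rk_insert_basis[OF matroid_M B z(2)] .
      also have "\<dots> = rk P (B \<times> {y})"
        using rk_times_singleton[of y B] False xy X BX by auto
      finally show ?thesis
        by (rule rk_insert_eq_mono[OF matroid_P, rotated]) (use z in auto)
    qed
  qed
  moreover have "finite (X \<times> Y)"
    using X Y matroid_ground_finite[OF matroid_M] matroid_ground_finite[OF matroid_N]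
    by (meson finite_SigmaI finite_subset)
  ultimately have "rk P (B \<times> Y \<union> X \<times> Y) = rk P (B \<times> Y)"
    using rk_Un_spanned[OF matroid_P] by blast
  moreover have "B \<times> Y \<union> X \<times> Y = X \<times> Y"
    using BX by auto
  ultimately show ?thesis
    by simp
qed

lemma rk_times_basis_right:
  assumes X: "X \<subseteq> ground M" and C: "is_basis_of N C Y" and Y: "Y \<subseteq> ground N"
  shows "rk P (X \<times> Y) = rk P (X \<times> C)"
proof -
  have CY: "C \<subseteq> Y"
    using C by (simp add: is_basis_of_def)
  have "rk P (insert z (X \<times> C)) = rk P (X \<times> C)" if "z \<in> X \<times> Y" for z
  proof -
    obtain x y where z: "z = (x, y)" "x \<in> X" "y \<in> Y"
      using \<open>z \<in> X \<times> Y\<close> by blast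
    with X Y have xy: "x \<in> ground M" "y \<in> ground N"
      by auto
    show ?thesis
    proof (cases "is_loop M x \<or> is_loop N y")
      case True
      with xy z(1) show ?thesis
        using rk_insert_loop[OF matroid_P] not_indep_if_loop by simp
    next
      case False
      have "insert z ({x} \<times> C) = {x} \<times> insert y C"
        using z(1) by auto
      then have "rk P (insert z ({x} \<times> C)) = rk N (insert y C)"
        using rk_singleton_times[of x "insert y C"] False xy Y CY by auto
      also have "\<dots> = rk N C"
        using rk_insert_basis[OF matroid_N C z(3)] .
      also have "\<dots> = rk P ({x} \<times> C)"
        using rk_singleton_times[of x C] False xy Y CY by auto
      finally show ?thesis
        by (rule rk_insert_eq_mono[OF matroid_P, rotated]) (use z in auto)
    qed
  qed
  moreover have "finite (X \<times> Y)"
    using X Y matroid_ground_finite[OF matroid_M] matroid_ground_finite[OF matroid_N]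
    by (meson finite_SigmaI finite_subset)
  ultimately have "rk P (X \<times> C \<union> X \<times> Y) = rk P (X \<times> C)"
    using rk_Un_spanned[OF matroid_P] by blast
  moreover have "X \<times> C \<union> X \<times> Y = X \<times> Y"
    using CY by auto
  ultimately show ?thesis
    by simp
qed


lemma rk_times_le:
  assumes X: "X \<subseteq> ground M" and Y: "Y \<subseteq> ground N"
  shows "rk P (X \<times> Y) \<le> rk M X * rk N Y"
proof -
  obtain B where B: "is_basis_of M B X"
    using ex_basis_of[OF matroid_M] .
  obtain C where C: "is_basis_of N C Y"
    using ex_basis_of[OF matroid_N] .
  have B': "B \<subseteq> ground M" "finite B" "card B = rk M X"
    using B X matroid_indep_finite[OF matroid_M] unfolding is_basis_of_def by auto
  have C': "finite C" "card C = rk N Y"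
    using C matroid_indep_finite[OF matroid_N] unfolding is_basis_of_def by auto
  have "rk P (X \<times> Y) = rk P (B \<times> C)"
    using rk_times_basis_left[OF X B Y] rk_times_basis_right[OF B'(1) C Y] by simp
  also have "\<dots> \<le> card (B \<times> C)"
    using B'(2) C'(1) by (intro rk_le_card[OF matroid_P]) auto
  finally show ?thesis
    using B'(3) C'(2) by (simp add: card_cartesian_product)
qed
end

locale matroid_tensor_product = matroid_quasi_product +
  assumes rk_ground_P: "rk P (ground P) = rk M (ground M) * rk N (ground N)"
begin

lemma rk_times_ground:
  assumes X: "X \<subseteq> ground M" shows "rk P (X \<times> ground N) = rk M X * rk N (ground N)"
proof -
  obtain BX where BX: "is_basis_of M BX X"
    using ex_basis_of[OF matroid_M] .
  then have BX': "BX \<subseteq> X" "indep M BX" "card BX = rk M X"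
    unfolding is_basis_of_def by auto
  then obtain B where B: "BX \<subseteq> B" "is_basis_of M B (ground M)"
    using indep_extends_to_basis[OF matroid_M BX'(2), of "ground M"] X by blast
  then have B': "B \<subseteq> ground M" "indep M B" "card B = rk M (ground M)"
    unfolding is_basis_of_def by auto
  have "rk M (ground M) * rk N (ground N) = rk P (B \<times> ground N)"
    using rk_ground_P rk_times_basis_left[OF order_refl B(2) order_refl] by (simp add: ground_P)
  also have "B \<times> ground N = BX \<times> ground N \<union> (B - BX) \<times> ground N"
    using B(1) by auto
  also have "rk P \<dots> \<le> rk P (BX \<times> ground N) + rk P ((B - BX) \<times> ground N)"
    by (rule rk_Un_le[OF matroid_P])
  also have "rk P (BX \<times> ground N) \<le> rk P (X \<times> ground N)"
    using BX'(1) by (intro rk_mono[OF matroid_P]) auto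
  also have "rk P ((B - BX) \<times> ground N) \<le> rk M (B - BX) * rk N (ground N)"
    using B'(1) by (intro rk_times_le) auto
  also have "rk M (B - BX) = rk M (ground M) - rk M X"
    using rk_indep[OF matroid_M matroid_indep_subset[OF matroid_M B'(2)]] B(1) B'(3) BX'(3)
      matroid_indep_finite[OF matroid_M B'(2)] by (simp add: card_Diff_subset finite_subset)
  finally have "rk M (ground M) * rk N (ground N)
      \<le> rk P (X \<times> ground N) + (rk M (ground M) - rk M X) * rk N (ground N)"
    by simp
  moreover have "rk M X * rk N (ground N) \<le> rk M (ground M) * rk N (ground N)"
    using rk_mono[OF matroid_M X] by (rule mult_le_mono1)
  ultimately have "rk M X * rk N (ground N) \<le> rk P (X \<times> ground N)"
    using diff_mult_distrib[of "rk M (ground M)" "rk M X" "rk N (ground N)"] by linarith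
  with rk_times_le[OF X order_refl] show ?thesis
    by simp
qed

lemma indep_times_basis:
  assumes I: "indep M I" and C: "is_basis_of N C (ground N)"
  shows "indep P (I \<times> C)"
proof -
  have I': "I \<subseteq> ground M" "finite I"
    using matroid_indep_subset_ground[OF matroid_M I] matroid_indep_finite[OF matroid_M I] .
  have C': "C \<subseteq> ground N" "finite C" "card C = rk N (ground N)"
    using C matroid_indep_finite[OF matroid_N] unfolding is_basis_of_def by auto
  have "rk P (I \<times> C) = rk P (I \<times> ground N)"
    using rk_times_basis_right[OF I'(1) C order_refl] by simp
  also have "\<dots> = card I * rk N (ground N)"
    using rk_times_ground[OF I'(1)] rk_indep[OF matroid_M I] by simp
  also have "\<dots> = card (I \<times> C)"
    using C'(3) by (simp add: card_cartesian_product)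
  finally show ?thesis
    using I'(2) C'(2) by (intro indep_if_rk_eq_card[OF matroid_P]) auto
qed

end

lemma ground_delete: "ground (delete Q S) = ground Q - S"
  by (auto simp: delete_def ground_restrict)

lemma is_loop_delete: "is_loop (delete Q S) e \<longleftrightarrow> e \<notin> S \<and> is_loop Q e"
  by (auto simp: is_loop_def delete_def ground_restrict indep_restrict)

lemma matroid_tensor_productI:
  assumes "is_matroid M" "is_matroid N" "tensor_product M N P"
  shows "matroid_tensor_product M N P"
  using assms unfolding tensor_product_def
  by unfold_locales (auto simp: quasi_product_def)

section \<open>Deletion\<close>

context matroid_tensor_product
begin

lemma delete_times_ground: "delete P (S \<times> ground N) = restrict P ((ground M - S) \<times> ground N)"
  by (simp add: delete_def ground_P Times_Diff_distrib1)

lemma iso_delete_left: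
  assumes "e \<in> ground M - S" "\<not> is_loop M e"
  shows "matroid_iso (Pair e) N (restrict (delete P (S \<times> ground N)) ({e} \<times> ground N))"
proof -
  have "(ground M - S) \<times> ground N \<inter> {e} \<times> ground N = {e} \<times> ground N"
    using assms(1) by auto
  then have "restrict (delete P (S \<times> ground N)) ({e} \<times> ground N) = restrict P ({e} \<times> ground N)"
    by (simp add: delete_times_ground restrict_restrict)
  with assms show ?thesis
    using quasi_product by (simp add: quasi_product_def)
qed

lemma iso_delete_right:
  assumes "f \<in> ground N" "\<not> is_loop N f"
  shows "matroid_iso (\<lambda>x. (x, f)) (delete M S)
    (restrict (delete P (S \<times> ground N)) ((ground M - S) \<times> {f}))"
proof -
  have "matroid_iso (\<lambda>x. (x, f)) M (restrict P (ground M \<times> {f}))"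
    using quasi_product assms by (simp add: quasi_product_def)
  then have "matroid_iso (\<lambda>x. (x, f)) (delete M S)
      (restrict (restrict P (ground M \<times> {f})) ((\<lambda>x. (x, f)) ` (ground M - S)))"
    unfolding delete_def by (rule matroid_iso_restrict) blast
  moreover have "ground M \<times> {f} \<inter> (ground M - S) \<times> {f}
      = (ground M - S) \<times> ground N \<inter> (ground M - S) \<times> {f}"
    using assms(1) by auto
  ultimately show ?thesis
    by (simp add: delete_times_ground restrict_restrict image_Pair_right)
qed

lemma rk_delete_loop_left:
  assumes "e \<in> ground M - S" "is_loop M e"
  shows "rk (delete P (S \<times> ground N)) ({e} \<times> ground N) = 0"
proof -
  have "{e} \<times> ground N \<inter> (ground M - S) \<times> ground N = {e} \<times> ground N"
    using assms(1) by auto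
  with assms show ?thesis
    using quasi_product by (simp add: quasi_product_def delete_times_ground rk_restrict)
qed

lemma rk_delete_loop_right:
  assumes "is_loop N f"
  shows "rk (delete P (S \<times> ground N)) ((ground M - S) \<times> {f}) = 0"
  using assms not_indep_loop_right
  by (auto simp: rk_eq_0_iff matroid_P is_matroid_restrict delete_times_ground indep_restrict)

lemma tensor_product_delete: "tensor_product (delete M S) N (delete P (S \<times> ground N))"
proof -
  have "rk (delete P (S \<times> ground N)) ((ground M - S) \<times> ground N)
      = rk (delete M S) (ground M - S) * rk N (ground N)"
    using rk_times_ground[of "ground M - S"] unfolding delete_times_ground
    by (simp add: delete_def rk_restrict)
  then show ?thesis
    unfolding tensor_product_def quasi_product_def ground_delete
    using iso_delete_left iso_delete_right rk_delete_loop_left rk_delete_loop_right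
    by (auto simp: is_loop_delete delete_times_ground ground_restrict ground_P
        Times_Diff_distrib1 is_matroid_restrict matroid_P)
qed

end

section \<open>Contraction\<close>

locale matroid_tensor_product_contraction = matroid_tensor_product +
  fixes T BT :: "'a set"
  assumes T_subset: "T \<subseteq> ground M" and basis_T: "is_basis_of M BT T"
begin

lemma BT_subset: "BT \<subseteq> T"
  using basis_T by (simp add: is_basis_of_def)

lemma T_times_subset: "T \<times> ground N \<subseteq> ground P"
  using T_subset by (auto simp: ground_P)

lemma matroid_contract_P: "is_matroid (contract P (T \<times> ground N))"
  by (rule is_matroid_contract[OF matroid_P T_times_subset])

lemma indep_contract_M: "indep (contract M T) I \<longleftrightarrow> I \<subseteq> ground M - T \<and> indep M (I \<union> BT)"
  by (rule indep_contract_iff[OF matroid_M T_subset basis_T])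

lemma basis_times_basis:
  assumes "is_basis_of N C (ground N)" shows "is_basis_of P (BT \<times> C) (T \<times> ground N)"
proof -
  have "indep P (BT \<times> C)"
    using indep_times_basis basis_T assms by (simp add: is_basis_of_def)
  moreover have "card (BT \<times> C) = rk P (T \<times> ground N)"
    using basis_T assms rk_times_ground[OF T_subset] by (simp add: is_basis_of_def card_cartesian_product)
  ultimately show ?thesis
    using basis_T assms unfolding is_basis_of_def by auto
qed

lemma indep_contract_P:
  assumes "is_basis_of N C (ground N)"
  shows "indep (contract P (T \<times> ground N)) W
    \<longleftrightarrow> W \<subseteq> (ground M - T) \<times> ground N \<and> indep P (W \<union> BT \<times> C)"
  using indep_contract_iff[OF matroid_P T_times_subset basis_times_basis[OF assms]]
  by (simp add: ground_P Times_Diff_distrib1)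

lemma ground_contract_P: "ground (contract P (T \<times> ground N)) = (ground M - T) \<times> ground N"
  by (simp add: ground_contract ground_P Times_Diff_distrib1)

lemma indep_contract_singleton_times_iff:
  assumes e: "e \<in> ground M - T" "\<not> is_loop (contract M T) e" and J: "J \<subseteq> ground N"
  shows "indep (contract P (T \<times> ground N)) ({e} \<times> J) \<longleftrightarrow> indep N J"
proof
  assume "indep (contract P (T \<times> ground N)) ({e} \<times> J)"
  then have "indep P ({e} \<times> J)"
    by (rule indep_contract_imp_indep[OF matroid_P])
  moreover have "indep M {e}"
    using e indep_contract_M[of "{e}"] matroid_indep_subset[OF matroid_M]
    by (auto simp: is_loop_def ground_contract)
  ultimately show "indep N J"
    using e(1) J indep_singleton_times_iff by (auto simp: is_loop_def)
next
  assume "indep N J"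
  then obtain C where C: "J \<subseteq> C" "is_basis_of N C (ground N)"
    using indep_extends_to_basis[OF matroid_N _ J] by blast
  have "indep M (insert e BT)"
    using e indep_contract_M[of "{e}"] by (simp add: is_loop_def ground_contract)
  then have "indep P (insert e BT \<times> C)"
    by (rule indep_times_basis[OF _ C(2)])
  then have "indep P ({e} \<times> J \<union> BT \<times> C)"
    by (rule matroid_indep_subset[OF matroid_P]) (use C(1) in auto)
  with e(1) J show "indep (contract P (T \<times> ground N)) ({e} \<times> J)"
    using indep_contract_P[OF C(2)] by auto
qed

lemma indep_contract_times_singleton_iff:
  assumes f: "f \<in> ground N" "\<not> is_loop N f" and I: "I \<subseteq> ground M - T"
  shows "indep (contract P (T \<times> ground N)) (I \<times> {f}) \<longleftrightarrow> indep (contract M T) I"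
proof -
  obtain C where C: "{f} \<subseteq> C" "is_basis_of N C (ground N)"
    using f indep_extends_to_basis[OF matroid_N, of "{f}" "ground N"] by (auto simp: is_loop_def)
  have "indep P (I \<times> {f} \<union> BT \<times> C) \<longleftrightarrow> indep M (I \<union> BT)"
  proof
    assume "indep P (I \<times> {f} \<union> BT \<times> C)"
    then have "indep P ((I \<union> BT) \<times> {f})"
      by (rule matroid_indep_subset[OF matroid_P]) (use C(1) in auto)
    moreover have "I \<union> BT \<subseteq> ground M"
      using I BT_subset T_subset by blast
    ultimately show "indep M (I \<union> BT)"
      using indep_times_singleton_iff[OF f] by blast
  next
    assume "indep M (I \<union> BT)"
    then have "indep P ((I \<union> BT) \<times> C)"
      by (rule indep_times_basis[OF _ C(2)])
    then show "indep P (I \<times> {f} \<union> BT \<times> C)"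
      by (rule matroid_indep_subset[OF matroid_P]) (use C(1) in auto)
  qed
  moreover have "I \<times> {f} \<subseteq> (ground M - T) \<times> ground N"
    using I f(1) by blast
  ultimately show ?thesis
    using I by (simp add: indep_contract_M indep_contract_P[OF C(2)])
qed

lemma iso_contract_left:
  assumes e: "e \<in> ground M - T" "\<not> is_loop (contract M T) e"
  shows "matroid_iso (Pair e) N (restrict (contract P (T \<times> ground N)) ({e} \<times> ground N))"
proof -
  have "(ground M - T) \<times> ground N \<inter> {e} \<times> ground N = {e} \<times> ground N"
    using e(1) by auto
  then have ground_fibre:
    "ground (restrict (contract P (T \<times> ground N)) ({e} \<times> ground N)) = {e} \<times> ground N"
    by (simp add: ground_restrict ground_contract_P)
  show ?thesis
    unfolding matroid_iso_def ground_fibre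
  proof (intro conjI allI impI)
    show "bij_betw (Pair e) (ground N) ({e} \<times> ground N)"
      by (auto simp: bij_betw_def inj_on_def)
    fix J assume J: "J \<subseteq> ground N"
    then have "{e} \<times> J \<subseteq> {e} \<times> ground N"
      by blast
    then show "indep N J \<longleftrightarrow> indep (restrict (contract P (T \<times> ground N)) ({e} \<times> ground N)) (Pair e ` J)"
      using indep_contract_singleton_times_iff[OF e J] by (simp add: indep_restrict image_Pair_left)
  qed
qed

lemma iso_contract_right:
  assumes f: "f \<in> ground N" "\<not> is_loop N f"
  shows "matroid_iso (\<lambda>x. (x, f)) (contract M T)
    (restrict (contract P (T \<times> ground N)) ((ground M - T) \<times> {f}))"
proof -
  have "(ground M - T) \<times> ground N \<inter> (ground M - T) \<times> {f} = (ground M - T) \<times> {f}"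
    using f(1) by auto
  then have ground_fibre:
    "ground (restrict (contract P (T \<times> ground N)) ((ground M - T) \<times> {f})) = (ground M - T) \<times> {f}"
    by (simp add: ground_restrict ground_contract_P)
  show ?thesis
    unfolding matroid_iso_def ground_fibre ground_contract
  proof (intro conjI allI impI)
    show "bij_betw (\<lambda>x. (x, f)) (ground M - T) ((ground M - T) \<times> {f})"
      by (auto simp: bij_betw_def inj_on_def)
    fix I assume I: "I \<subseteq> ground M - T"
    then have "I \<times> {f} \<subseteq> (ground M - T) \<times> {f}"
      by blast
    then show "indep (contract M T) I \<longleftrightarrow>
        indep (restrict (contract P (T \<times> ground N)) ((ground M - T) \<times> {f})) ((\<lambda>x. (x, f)) ` I)"
      using indep_contract_times_singleton_iff[OF f I] by (simp add: indep_restrict image_Pair_right)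
  qed
qed

lemma rk_contract_loop_left:
  assumes e: "e \<in> ground M - T" "is_loop (contract M T) e"
  shows "rk (contract P (T \<times> ground N)) ({e} \<times> ground N) = 0"
proof -
  have not_indep_e: "\<not> indep M (insert e BT)"
    using e indep_contract_M[of "{e}"] by (simp add: is_loop_def ground_contract)
  have "\<not> indep (contract P (T \<times> ground N)) {(e, y)}" if y: "y \<in> ground N" for y
  proof
    assume indep_ey: "indep (contract P (T \<times> ground N)) {(e, y)}"
    then have "\<not> is_loop N y"
      using e(1) not_indep_loop_right indep_contract_imp_indep[OF matroid_P] by blast
    then obtain C where C: "{y} \<subseteq> C" "is_basis_of N C (ground N)"
      using y indep_extends_to_basis[OF matroid_N, of "{y}" "ground N"] by (auto simp: is_loop_def)
    have "indep P ({(e, y)} \<union> BT \<times> C)"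
      using indep_ey indep_contract_P[OF C(2)] by simp
    then have "indep P (insert e BT \<times> {y})"
      by (rule matroid_indep_subset[OF matroid_P]) (use C(1) in auto)
    with e(1) y \<open>\<not> is_loop N y\<close> have "indep M (insert e BT)"
      using indep_times_singleton_iff BT_subset T_subset by blast
    with not_indep_e show False ..
  qed
  then show ?thesis
    by (simp add: rk_eq_0_iff[OF matroid_contract_P])
qed

lemma rk_contract_loop_right:
  assumes f: "is_loop N f"
  shows "rk (contract P (T \<times> ground N)) ((ground M - T) \<times> {f}) = 0"
proof -
  have "\<not> indep (contract P (T \<times> ground N)) {(x, f)}" if "x \<in> ground M" for x
    using f that not_indep_loop_right indep_contract_imp_indep[OF matroid_P] by blast
  then show ?thesis
    by (auto simp: rk_eq_0_iff[OF matroid_contract_P])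
qed

lemma rk_ground_contract:
  "rk (contract P (T \<times> ground N)) ((ground M - T) \<times> ground N)
    = rk (contract M T) (ground M - T) * rk N (ground N)"
proof -
  have "(ground M - T) \<times> ground N \<union> T \<times> ground N = ground M \<times> ground N"
    using T_subset by auto
  then have "rk (contract P (T \<times> ground N)) ((ground M - T) \<times> ground N)
      = rk M (ground M) * rk N (ground N) - rk M T * rk N (ground N)"
    using rk_contract[OF matroid_P T_times_subset, of "(ground M - T) \<times> ground N"]
      rk_times_ground[OF T_subset] rk_ground_P
    by (simp add: ground_P Times_Diff_distrib1)
  moreover have "rk (contract M T) (ground M - T) = rk M (ground M) - rk M T"
    using rk_contract[OF matroid_M T_subset, of "ground M - T"] T_subset
    by (simp add: Un_absorb2)
  ultimately show ?thesis
    by (simp add: diff_mult_distrib)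
qed

end

lemma (in matroid_tensor_product) tensor_product_contract:
  assumes T: "T \<subseteq> ground M"
  shows "tensor_product (contract M T) N (contract P (T \<times> ground N))"
proof -
  obtain BT where "is_basis_of M BT T"
    using ex_basis_of[OF matroid_M] .
  with T interpret matroid_tensor_product_contraction M N P T BT
    by unfold_locales
  show ?thesis
    unfolding tensor_product_def quasi_product_def ground_contract
    using matroid_contract_P iso_contract_left iso_contract_right
      rk_contract_loop_left rk_contract_loop_right rk_ground_contract
    by (simp add: ground_P Times_Diff_distrib1)
qed

theorem proposition2p6:
  fixes M :: "'a matroid" and N :: "'b matroid" and P :: "('a \<times> 'b) matroid"
    and S T :: "'a set"
  assumes "is_matroid M" and "is_matroid N"
    and "tensor_product M N P"
    and "S \<subseteq> ground M" and "T \<subseteq> ground M" and "S \<inter> T = {}"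
  shows "tensor_product (contract (delete M S) T) N
           (contract (delete P (S \<times> ground N)) (T \<times> ground N))"
proof -
  interpret matroid_tensor_product M N P
    using assms(1-3) by (rule matroid_tensor_productI)
  \<comment> \<open>Deletion works for any \<open>S\<close>.\<close>
  have "tensor_product (delete M S) N (delete P (S \<times> ground N))"
    by (rule tensor_product_delete)
  moreover have "is_matroid (delete M S)"
    unfolding delete_def by (rule is_matroid_restrict[OF assms(1)])
  ultimately interpret deleted: matroid_tensor_product "delete M S" N "delete P (S \<times> ground N)"
    using assms(2) by (intro matroid_tensor_productI)
  have "T \<subseteq> ground (delete M S)"
    using assms(5,6) by (auto simp: ground_delete)
  then show ?thesis
    by (rule deleted.tensor_product_contract)
qed

end
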